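(* Let $p\ge1$, $m=2^p$, $U_m=\frac{1}{\sqrt m}H(m)$, and let two identical particles be injected in an arbitrary pair of distinct input modes $a<b$ (input state $(a,b)$). Then the number of suppressed output states $(i,j)$, $1\le i\le j\le m$, equals $m^2/4$ if the particles are bosons (fraction $\frac12\frac{m}{m+1}$), and equals $\frac12 m(m+1)-\frac{m^2}{4}$ if the particles are fermions (fraction $\frac12\frac{m+2}{m+1}$); i.e. the same numbers as for the input $(1,2)$.
   Context: For $m=2^p$, the Sylvester matrix $H(m)$ is defined recursively by $H(1)=[1]$ and $H(2^p)=\begin{bmatrix}H(2^{p-1})&H(2^{p-1})\\ H(2^{p-1})&-H(2^{p-1})\end{bmatrix}$, rows and columns indexed $1,\dots,m$. An $n$-particle state on $m$ modes is a nondecreasing tuple $\vec t=(t_1\le\dots\le t_n)$ with $t_i\in\{1,\dots,m\}$; $\mu_k(\vec t)=|\{i:t_i=k\}|$. For input $\vec s$ and output $\vec t$, the scattering matrix is $S_{i,j}=U_{t_i,s_j}$; the bosonic amplitude is $\mathrm{perm}\,S/\sqrt{\prod_k\mu_k(\vec s)!\prod_k\mu_k(\vec t)!}$ and the fermionic amplitude is $\det S/\sqrt{\prod_k\mu_k(\vec s)!\prod_k\mu_k(\vec t)!}$. An output state is suppressed if its amplitude is zero. *)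

theory Defs
  imports Complex_Main "HOL-Combinatorics.Permutations"
begin

text \<open>Sylvester matrix H(2^p), rows and columns indexed 1..2^p (entries outside
  this range are irrelevant).\<close>
fun sylvester :: "nat \<Rightarrow> nat \<Rightarrow> nat \<Rightarrow> real" where
  "sylvester 0 i j = 1"
| "sylvester (Suc p) i j =
     (let h = 2 ^ p in
      if i \<le> h \<and> j \<le> h then sylvester p i j
      else if i \<le> h then sylvester p i (j - h)
      else if j \<le> h then sylvester p (i - h) j
      else - sylvester p (i - h) (j - h))"

definition Umat :: "nat \<Rightarrow> nat \<Rightarrow> nat \<Rightarrow> real" where
  "Umat p i j = sylvester p i j / sqrt (real (2 ^ p))"

text \<open>States are lists (t_1,...,t_n) (nondecreasing) of modes. mu k t = occupation of mode k.\<close>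
definition occ :: "nat \<Rightarrow> nat list \<Rightarrow> nat" where
  "occ k t = length (filter (\<lambda>x. x = k) t)"

definition scattering :: "(nat \<Rightarrow> nat \<Rightarrow> real) \<Rightarrow> nat list \<Rightarrow> nat list \<Rightarrow> nat \<Rightarrow> nat \<Rightarrow> real" where
  "scattering U s t i j = U (t ! i) (s ! j)"

definition permanent :: "nat \<Rightarrow> (nat \<Rightarrow> nat \<Rightarrow> real) \<Rightarrow> real" where
  "permanent n S = (\<Sum>\<sigma> \<in> {\<sigma>. \<sigma> permutes {..<n}}. \<Prod>i<n. S i (\<sigma> i))"

definition determinant :: "nat \<Rightarrow> (nat \<Rightarrow> nat \<Rightarrow> real) \<Rightarrow> real" where
  "determinant n S = (\<Sum>\<sigma> \<in> {\<sigma>. \<sigma> permutes {..<n}}. of_int (sign \<sigma>) * (\<Prod>i<n. S i (\<sigma> i)))"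

definition occ_norm :: "nat \<Rightarrow> nat list \<Rightarrow> nat list \<Rightarrow> real" where
  "occ_norm m s t = sqrt (real ((\<Prod>k\<in>{1..m}. fact (occ k s)) * (\<Prod>k\<in>{1..m}. fact (occ k t))))"

definition boson_amp :: "nat \<Rightarrow> (nat \<Rightarrow> nat \<Rightarrow> real) \<Rightarrow> nat list \<Rightarrow> nat list \<Rightarrow> real" where
  "boson_amp m U s t = permanent (length s) (scattering U s t) / occ_norm m s t"

definition fermion_amp :: "nat \<Rightarrow> (nat \<Rightarrow> nat \<Rightarrow> real) \<Rightarrow> nat list \<Rightarrow> nat list \<Rightarrow> real" where
  "fermion_amp m U s t = determinant (length s) (scattering U s t) / occ_norm m s t"

end

theory Submission imports Defs begin

text \<open>Put g i = H(i,a) H(i,b) \<in> {1,-1}. For two particles the permanent vanishes exactly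
  when g i \<noteq> g j and the determinant exactly when g i = g j. Orthogonality of the columns
  a \<noteq> b of H makes g take each value on exactly m/2 of the rows, so the suppressed bosonic
  outputs are the (m/2)^2 pairs joining a row of one sign to a row of the other, and the
  suppressed fermionic outputs are all remaining pairs i \<le> j.\<close>

lemma sylvester_sign: "sylvester p i j = 1 \<or> sylvester p i j = -1"
  by (induction p arbitrary: i j) (auto simp: Let_def)

lemma sum_atLeastAtMost_double:
  fixes f :: "nat \<Rightarrow> 'a::comm_monoid_add"
  shows "(\<Sum>i=1..h+h. f i) = (\<Sum>i=1..h. f i) + (\<Sum>i=1..h. f (i + h))"
  using sum.ub_add_nat[of 1 h f h] sum.shift_bounds_cl_nat_ivl[of f 1 h h]
  by (simp add: add.commute)

lemma sylvester_columns_orthogonal: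
  assumes "1 \<le> a" "a \<le> 2 ^ p" "1 \<le> b" "b \<le> 2 ^ p"
  shows "(\<Sum>i=1..2^p. sylvester p i a * sylvester p i b) = (if a = b then 2 ^ p else 0)"
  using assms
proof (induction p arbitrary: a b)
  case 0
  then show ?case by simp
next
  case (Suc p)
  define h :: nat where "h = 2 ^ p"
  define red where "red x = (if x \<le> h then x else x - h)" for x
  define sgn :: "nat \<Rightarrow> real" where "sgn x = (if x \<le> h then 1 else -1)" for x
  define c where "c = (\<Sum>i=1..h. sylvester p i (red a) * sylvester p i (red b))"
  have red_range: "1 \<le> red x" "red x \<le> 2 ^ p" if "1 \<le> x" "x \<le> 2 ^ Suc p" for x
    using that by (auto simp: red_def h_def)
  have upper: "sylvester (Suc p) i x = sylvester p i (red x)" if "i \<le> h" for i x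
    using that by (simp add: Let_def h_def red_def)
  have lower: "sylvester (Suc p) (i + h) x = sgn x * sylvester p i (red x)" if "1 \<le> i" for i x
    using that by (simp add: Let_def h_def red_def sgn_def)
  have "(\<Sum>i=1..2^Suc p. sylvester (Suc p) i a * sylvester (Suc p) i b)
      = (\<Sum>i=1..h. sylvester (Suc p) i a * sylvester (Suc p) i b)
        + (\<Sum>i=1..h. sylvester (Suc p) (i + h) a * sylvester (Suc p) (i + h) b)"
    unfolding power_Suc mult_2 h_def[symmetric] by (rule sum_atLeastAtMost_double)
  also have "\<dots> = (1 + sgn a * sgn b) * c"
    by (simp add: upper lower c_def algebra_simps sum.distrib sum_distrib_left del: sylvester.simps)
  also have "\<dots> = (if a = b then 2 ^ Suc p else 0)"
  proof (cases "red a = red b")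
    case True
    then have "a = b \<or> sgn a * sgn b = -1"
      by (auto simp: red_def sgn_def split: if_splits)
    moreover have "c = h" if "a = b"
      using Suc.IH[of "red a" "red a"] red_range Suc.prems that by (simp add: c_def h_def)
    ultimately show ?thesis by (auto simp: sgn_def h_def)
  next
    case False
    then have "c = 0"
      using Suc.IH[of "red a" "red b"] red_range Suc.prems by (simp add: c_def h_def)
    with False show ?thesis by auto
  qed
  finally show ?case .
qed

lemma permutes_lessThan_2: "{\<sigma>. \<sigma> permutes {..<2::nat}} = {id, transpose 0 1}"
proof (intro equalityI subsetI)
  fix \<sigma> assume "\<sigma> \<in> {\<sigma>. \<sigma> permutes {..<2::nat}}"
  then have perm: "\<sigma> permutes {..<2::nat}" by simp
  have fixed: "\<sigma> x = x" if "x \<notin> {..<2}" for x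
    using perm that by (simp add: permutes_def)
  have range: "\<sigma> 0 < 2" "\<sigma> 1 < 2"
    using permutes_in_image[OF perm] by auto
  have "\<sigma> 0 \<noteq> \<sigma> 1"
    using permutes_inj[OF perm] by (metis inj_eq zero_neq_one)
  then have "(\<sigma> 0 = 0 \<and> \<sigma> 1 = 1) \<or> (\<sigma> 0 = 1 \<and> \<sigma> 1 = 0)"
    using range by auto
  then have "\<sigma> = id \<or> \<sigma> = transpose 0 1"
    using fixed by (auto simp: fun_eq_iff transpose_def) (metis less_2_cases_iff lessThan_iff)+
  then show "\<sigma> \<in> {id, transpose 0 1}" by simp
qed (auto intro: permutes_id permutes_swap_id)

lemma id_neq_transpose_0_1: "id \<noteq> (transpose 0 1 :: nat \<Rightarrow> nat)"
  by (metis id_apply transpose_apply_first zero_neq_one)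

lemma permanent_2: "permanent 2 S = S 0 0 * S 1 1 + S 0 1 * S 1 0"
  using id_neq_transpose_0_1 unfolding permanent_def permutes_lessThan_2
  by (simp add: lessThan_nat_numeral)

lemma determinant_2: "determinant 2 S = S 0 0 * S 1 1 - S 0 1 * S 1 0"
  using id_neq_transpose_0_1 unfolding determinant_def permutes_lessThan_2
  by (simp add: lessThan_nat_numeral sign_swap_id)

lemma occ_norm_nonzero: "occ_norm m s t \<noteq> 0"
  by (simp add: occ_norm_def)

lemma boson_amp_2_eq_0_iff:
  "boson_amp m U [a, b] [i, j] = 0 \<longleftrightarrow> U i a * U j b + U i b * U j a = 0"
  using occ_norm_nonzero[of m "[a, b]" "[i, j]"]
  by (simp add: boson_amp_def permanent_2[unfolded numeral_2_eq_2] scattering_def)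

lemma fermion_amp_2_eq_0_iff:
  "fermion_amp m U [a, b] [i, j] = 0 \<longleftrightarrow> U i a * U j b - U i b * U j a = 0"
  using occ_norm_nonzero[of m "[a, b]" "[i, j]"]
  by (simp add: fermion_amp_def determinant_2[unfolded numeral_2_eq_2] scattering_def)

lemma boson_amp_Umat_eq_0_iff:
  "boson_amp m (Umat p) [a, b] [i, j] = 0 \<longleftrightarrow>
     sylvester p i a * sylvester p i b \<noteq> sylvester p j a * sylvester p j b"
  using sylvester_sign[of p i a] sylvester_sign[of p i b]
    sylvester_sign[of p j a] sylvester_sign[of p j b]
  by (auto simp: boson_amp_2_eq_0_iff Umat_def)

lemma fermion_amp_Umat_eq_0_iff:
  "fermion_amp m (Umat p) [a, b] [i, j] = 0 \<longleftrightarrow>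
     sylvester p i a * sylvester p i b = sylvester p j a * sylvester p j b"
  using sylvester_sign[of p i a] sylvester_sign[of p i b]
    sylvester_sign[of p j a] sylvester_sign[of p j b]
  by (auto simp: fermion_amp_2_eq_0_iff Umat_def)

lemma card_sign_balanced:
  fixes g :: "nat \<Rightarrow> real"
  assumes "finite A" "\<And>i. i \<in> A \<Longrightarrow> g i = 1 \<or> g i = -1" "sum g A = 0"
  shows "card {i\<in>A. g i = 1} = card {i\<in>A. g i \<noteq> 1}"
proof -
  let ?P = "{i\<in>A. g i = 1}" and ?N = "{i\<in>A. g i \<noteq> 1}"
  have "A = ?P \<union> ?N" "?P \<inter> ?N = {}" "finite ?P" "finite ?N"
    using assms(1) by auto
  then have "0 = sum g ?P + sum g ?N"
    using assms(3) by (metis sum.union_disjoint)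
  also have "sum g ?N = sum (\<lambda>_. -1) ?N"
    using assms(2) by (intro sum.cong) auto
  finally show ?thesis by simp
qed

lemma card_upper_triangle: "2 * card {(i, j). 1 \<le> i \<and> i \<le> j \<and> j \<le> (n::nat)} = n * (n + 1)"
proof (induction n)
  case 0
  have "{(i, j). 1 \<le> i \<and> i \<le> j \<and> j \<le> (0::nat)} = {}"
    by auto
  then show ?case by (simp only: card.empty)
next
  case (Suc n)
  let ?T = "{(i, j). 1 \<le> i \<and> i \<le> j \<and> j \<le> n}" and ?C = "(\<lambda>i. (i, Suc n)) ` {1..Suc n}"
  have "{(i, j). 1 \<le> i \<and> i \<le> j \<and> j \<le> Suc n} = ?T \<union> ?C"
    by auto
  moreover have "finite ?T"
    by (rule finite_subset[of _ "{1..n} \<times> {1..n}"]) auto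
  moreover have "?T \<inter> ?C = {}"
    by auto
  moreover have "card ?C = Suc n"
    by (subst card_image) (auto simp: inj_on_def)
  ultimately show ?case
    using Suc.IH by (simp add: card_Un_disjoint)
qed

lemma card_discordant_pairs:
  "card {(i, j). 1 \<le> i \<and> i \<le> j \<and> j \<le> (n::nat) \<and> Q i \<noteq> Q j}
     = card {i\<in>{1..n}. Q i} * card {i\<in>{1..n}. \<not> Q i}"
proof -
  let ?P = "{i\<in>{1..n}. Q i}" and ?N = "{i\<in>{1..n}. \<not> Q i}"
  have "bij_betw (\<lambda>(x, y). (min x y, max x y)) (?P \<times> ?N)
          {(i, j). 1 \<le> i \<and> i \<le> j \<and> j \<le> n \<and> Q i \<noteq> Q j}"
  proof (rule bij_betwI')
    fix u v assume "u \<in> ?P \<times> ?N" "v \<in> ?P \<times> ?N"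
    then show "((\<lambda>(x, y). (min x y, max x y)) u = (\<lambda>(x, y). (min x y, max x y)) v) = (u = v)"
      by (cases u; cases v) (auto simp: min_def max_def split: if_splits)
  next
    fix u assume "u \<in> ?P \<times> ?N"
    then show "(\<lambda>(x, y). (min x y, max x y)) u
                 \<in> {(i, j). 1 \<le> i \<and> i \<le> j \<and> j \<le> n \<and> Q i \<noteq> Q j}"
      by (cases u) (auto simp: min_def max_def)
  next
    fix v assume v: "v \<in> {(i, j). 1 \<le> i \<and> i \<le> j \<and> j \<le> n \<and> Q i \<noteq> Q j}"
    then obtain i j where "v = (i, j)" "1 \<le> i" "i \<le> j" "j \<le> n" "Q i \<noteq> Q j"
      by auto
    then show "\<exists>u\<in>?P \<times> ?N. v = (\<lambda>(x, y). (min x y, max x y)) u"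
    proof (cases "Q i")
      case True
      with \<open>v = (i, j)\<close> show ?thesis
        using \<open>1 \<le> i\<close> \<open>i \<le> j\<close> \<open>j \<le> n\<close> \<open>Q i \<noteq> Q j\<close>
        by (intro bexI[of _ "(i, j)"]) auto
    next
      case False
      with \<open>v = (i, j)\<close> show ?thesis
        using \<open>1 \<le> i\<close> \<open>i \<le> j\<close> \<open>j \<le> n\<close> \<open>Q i \<noteq> Q j\<close>
        by (intro bexI[of _ "(j, i)"]) auto
    qed
  qed
  then show ?thesis
    by (simp add: bij_betw_same_card[symmetric] card_cartesian_product)
qed

lemma card_pairs_of_balanced_predicate:
  fixes n :: nat
  assumes "card {i\<in>{1..n}. Q i} = card {i\<in>{1..n}. \<not> Q i}"
  shows "card {(i, j). 1 \<le> i \<and> i \<le> j \<and> j \<le> n \<and> Q i \<noteq> Q j} = n ^ 2 div 4"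
    and "card {(i, j). 1 \<le> i \<and> i \<le> j \<and> j \<le> n \<and> Q i = Q j}
           = n * (n + 1) div 2 - n ^ 2 div 4"
proof -
  define k where "k = card {i\<in>{1..n}. Q i}"
  let ?T = "{(i, j). 1 \<le> i \<and> i \<le> j \<and> j \<le> n}"
  let ?D = "{(i, j). 1 \<le> i \<and> i \<le> j \<and> j \<le> n \<and> Q i \<noteq> Q j}"
  have "card {1..n} = card ({i\<in>{1..n}. Q i} \<union> {i\<in>{1..n}. \<not> Q i})"
    by (rule arg_cong[where f = card]) auto
  also have "\<dots> = card {i\<in>{1..n}. Q i} + card {i\<in>{1..n}. \<not> Q i}"
    by (rule card_Un_disjoint) auto
  finally have "n = card {i\<in>{1..n}. Q i} + card {i\<in>{1..n}. \<not> Q i}"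
    by simp
  then have n_eq: "n = 2 * k"
    using assms by (simp add: k_def)
  have "card ?D = k * k"
    using card_discordant_pairs[of n Q] assms by (simp add: k_def)
  then show discordant: "card ?D = n ^ 2 div 4"
    by (simp add: n_eq power_mult_distrib power2_eq_square)
  have "?D \<subseteq> ?T" "finite ?T"
    by (auto intro: finite_subset[of _ "{1..n} \<times> {1..n}"])
  moreover have "{(i, j). 1 \<le> i \<and> i \<le> j \<and> j \<le> n \<and> Q i = Q j} = ?T - ?D"
    by auto
  ultimately show "card {(i, j). 1 \<le> i \<and> i \<le> j \<and> j \<le> n \<and> Q i = Q j}
                     = n * (n + 1) div 2 - n ^ 2 div 4"
    using card_upper_triangle[of n] discordant by (simp add: card_Diff_subset finite_subset)
qed

theorem proposition3:
  fixes p a b :: nat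
  assumes "p \<ge> 1" and "1 \<le> a" and "a < b" and "b \<le> 2 ^ p"
  shows "card {(i, j). 1 \<le> i \<and> i \<le> j \<and> j \<le> 2 ^ p \<and>
                 boson_amp (2 ^ p) (Umat p) [a, b] [i, j] = 0} = (2 ^ p) ^ 2 div 4
       \<and> card {(i, j). 1 \<le> i \<and> i \<le> j \<and> j \<le> 2 ^ p \<and>
                 fermion_amp (2 ^ p) (Umat p) [a, b] [i, j] = 0}
           = (2 ^ p) * (2 ^ p + 1) div 2 - (2 ^ p) ^ 2 div 4"
proof -
  define g where "g i = sylvester p i a * sylvester p i b" for i
  have g_sign: "g i = 1 \<or> g i = -1" for i
    using sylvester_sign[of p i a] sylvester_sign[of p i b] by (auto simp: g_def)
  have "sum g {1..2 ^ p} = 0"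
    using sylvester_columns_orthogonal[of a p b] assms by (simp add: g_def)
  then have "card {i\<in>{1..2 ^ p}. g i = 1} = card {i\<in>{1..2 ^ p}. g i \<noteq> 1}"
    using card_sign_balanced g_sign by blast
  note counts = card_pairs_of_balanced_predicate[of "2 ^ p" "\<lambda>i. g i = 1", OF this]
  have "g i = g j \<longleftrightarrow> (g i = 1) = (g j = 1)" for i j
    using g_sign[of i] g_sign[of j] by auto
  then show ?thesis
    using counts by (simp add: boson_amp_Umat_eq_0_iff fermion_amp_Umat_eq_0_iff g_def)
qed

end
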